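(* If a square matrix $A$ has a $k\times k$ principal submatrix $A[\kappa]$ that is an invertible, Hurwitz-unstable $P^-_0$ matrix and that has a Hurwitz-stable $(k-1)\times(k-1)$ principal submatrix, then $A$ is $D$-Hopf.
   Context: Hurwitz-stable: all eigenvalues have negative real part; Hurwitz-unstable: at least one eigenvalue has positive real part. $P^-_0$ matrix: every nonzero $j\times j$ principal minor has sign $(-1)^j$. Inertia: numbers of eigenvalues with negative, positive, zero real part. $A$ is $D$-Hopf if there exist an invertible principal submatrix $A[\kappa']$ and positive diagonal $D_1,D_2$ with $\operatorname{inertia}(A[\kappa']D_1)\ne\operatorname{inertia}(A[\kappa']D_2)$. *)

theory Defs
  imports "Jordan_Normal_Form.Jordan_Normal_Form" "Jordan_Normal_Form.DL_Submatrix"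
begin

definition principal_submatrix :: "real mat \<Rightarrow> nat set \<Rightarrow> real mat" where
  "principal_submatrix A K = submatrix A K K"

definition cchar_poly :: "real mat \<Rightarrow> complex poly" where
  "cchar_poly A = char_poly (map_mat complex_of_real A)"

definition hurwitz_stable :: "real mat \<Rightarrow> bool" where
  "hurwitz_stable A \<longleftrightarrow> (\<forall>z. eigenvalue (map_mat complex_of_real A) z \<longrightarrow> Re z < 0)"

definition hurwitz_unstable :: "real mat \<Rightarrow> bool" where
  "hurwitz_unstable A \<longleftrightarrow> (\<exists>z. eigenvalue (map_mat complex_of_real A) z \<and> Re z > 0)"

definition P0_minus :: "real mat \<Rightarrow> bool" where
  "P0_minus A \<longleftrightarrow> (\<forall>K. K \<subseteq> {..<dim_row A} \<and> K \<noteq> {} \<longrightarrow>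
     det (principal_submatrix A K) \<noteq> 0 \<longrightarrow>
     sgn (det (principal_submatrix A K)) = (-1) ^ card K)"

definition inertia :: "real mat \<Rightarrow> nat \<times> nat \<times> nat" where
  "inertia A = (let p = cchar_poly A in
     ((\<Sum>z\<in>{z. poly p z = 0 \<and> Re z < 0}. order z p),
      (\<Sum>z\<in>{z. poly p z = 0 \<and> Re z > 0}. order z p),
      (\<Sum>z\<in>{z. poly p z = 0 \<and> Re z = 0}. order z p)))"

definition pos_diagonal :: "nat \<Rightarrow> real mat \<Rightarrow> bool" where
  "pos_diagonal m D \<longleftrightarrow> D \<in> carrier_mat m m \<and> diagonal_mat D \<and> (\<forall>i<m. D $$ (i,i) > 0)"

definition D_Hopf :: "real mat \<Rightarrow> bool" where
  "D_Hopf A \<longleftrightarrow> (\<exists>K D1 D2. K \<subseteq> {..<dim_row A} \<and>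
     invertible_mat (principal_submatrix A K) \<and>
     pos_diagonal (card K) D1 \<and> pos_diagonal (card K) D2 \<and>
     inertia (principal_submatrix A K * D1) \<noteq> inertia (principal_submatrix A K * D2))"

end

theory Submission
  imports "HOL-Analysis.Topology_Euclidean_Space" Defs
begin

text \<open>Let \<open>B = A[\<kappa>]\<close> and let \<open>B(j)\<close> be its Hurwitz-stable principal submatrix obtained by deleting
  row and column \<open>j\<close>. Multiplying \<open>B\<close> on the right by \<open>D\<^sub>\<epsilon> = diag(1,\<dots>,\<epsilon>,\<dots>,1)\<close> scales column \<open>j\<close>,
  and since the determinant is linear in that column the characteristic polynomial of \<open>B D\<^sub>\<epsilon>\<close> is
  \<open>(1 - \<epsilon>) z p(z) + \<epsilon> q(z)\<close>, where \<open>p\<close> and \<open>q\<close> are those of \<open>B(j)\<close> and \<open>B\<close>. As \<open>\<epsilon> \<rightarrow> 0\<close>, the roots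
  stay bounded; away from \<open>0\<close> they approach the roots of \<open>p\<close>, which lie in the open left half-plane,
  and near \<open>0\<close> a root satisfies \<open>(1 - \<epsilon>) z \<approx> -\<epsilon> q(0)/p(0)\<close>. The \<open>P\<^sub>0\<^sup>-\<close> sign pattern gives
  \<open>sgn det B = -sgn det B(j)\<close>, i.e. \<open>q(0)/p(0) > 0\<close>, so this root also has negative real part.
  Hence \<open>B D\<^sub>\<epsilon>\<close> is Hurwitz-stable for small \<open>\<epsilon>\<close>, whereas \<open>B D\<^sub>1 = B\<close> is Hurwitz-unstable.\<close>

lemma det_linear_col:
  fixes X Y Z :: "'a :: comm_ring_1 mat"
  assumes X: "X \<in> carrier_mat n n" and Y: "Y \<in> carrier_mat n n" and Z: "Z \<in> carrier_mat n n"
    and j: "j < n"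
    and off: "\<And>i l. i < n \<Longrightarrow> l < n \<Longrightarrow> l \<noteq> j \<Longrightarrow> X $$ (i,l) = Y $$ (i,l) \<and> Z $$ (i,l) = Y $$ (i,l)"
    and col: "\<And>i. i < n \<Longrightarrow> X $$ (i,j) = a * Y $$ (i,j) + b * Z $$ (i,j)"
  shows "det X = a * det Y + b * det Z"
proof -
  have "mat_delete X i j = mat_delete Y i j" "mat_delete Z i j = mat_delete Y i j" if "i < n" for i
    using X Y Z off by (auto simp: mat_delete_def intro!: eq_matI)
  then have cof: "cofactor X i j = cofactor Y i j" "cofactor Z i j = cofactor Y i j" if "i < n" for i
    using that by (auto simp: cofactor_def)
  have "det X = (\<Sum>i<n. X $$ (i,j) * cofactor X i j)"
    by (rule laplace_expansion_column[OF X j])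
  also have "\<dots> = a * (\<Sum>i<n. Y $$ (i,j) * cofactor Y i j) + b * (\<Sum>i<n. Z $$ (i,j) * cofactor Z i j)"
    by (auto simp: col cof sum.distrib sum_distrib_left algebra_simps intro!: sum.cong)
  also have "\<dots> = a * det Y + b * det Z"
    using laplace_expansion_column[OF Y j] laplace_expansion_column[OF Z j] by simp
  finally show ?thesis .
qed

lemma poly_char_poly_multcol:
  fixes M :: "'a :: field mat"
  assumes M: "M \<in> carrier_mat k k" and j: "j < k"
  shows "poly (char_poly (multcol j e M)) z =
    (1 - e) * (z * poly (char_poly (mat_delete M j j)) z) + e * poly (char_poly M) z"
proof -
  have M0: "multcol j 0 M \<in> carrier_mat k k" using M by auto
  have "char_poly (multcol j 0 M) = monom 1 1 * char_poly (mat_delete (multcol j 0 M) j j)"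
    by (rule char_poly_0_column[OF _ M0 j]) (use M j in \<open>auto simp: mat_multcol_def\<close>)
  also have "mat_delete (multcol j 0 M) j j = mat_delete M j j"
    using M j by (auto simp: mat_delete_def intro!: eq_matI)
  finally have zero_col: "poly (char_poly (multcol j 0 M)) z = z * poly (char_poly (mat_delete M j j)) z"
    by (simp add: poly_monom)
  have "poly (char_poly (multcol j e M)) z = det (- char_matrix (multcol j e M) z)"
    by (rule char_poly_matrix) (use M in auto)
  also have "\<dots> = (1 - e) * det (- char_matrix (multcol j 0 M) z) + e * det (- char_matrix M z)"
    by (rule det_linear_col[of _ k _ _ j]) (use M j in \<open>auto simp: char_matrix_def algebra_simps\<close>)
  also have "\<dots> = (1 - e) * poly (char_poly (multcol j 0 M)) z + e * poly (char_poly M) z"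
    using char_poly_matrix[OF M0] char_poly_matrix[OF M] by simp
  finally show ?thesis unfolding zero_col .
qed

lemma poly_cchar_poly_multcol:
  assumes B: "B \<in> carrier_mat k k" and j: "j < k"
  shows "poly (cchar_poly (multcol j e B)) z =
    (1 - complex_of_real e) * (z * poly (cchar_poly (mat_delete B j j)) z)
      + complex_of_real e * poly (cchar_poly B) z"
proof -
  have "map_mat complex_of_real (multcol j e B) = multcol j (complex_of_real e) (map_mat complex_of_real B)"
    "map_mat complex_of_real (mat_delete B j j) = mat_delete (map_mat complex_of_real B) j j"
    using B j by (auto simp: mat_delete_def intro!: eq_matI)
  then show ?thesis
    using poly_char_poly_multcol[of "map_mat complex_of_real B" k j] B j by (simp add: cchar_poly_def)
qed

lemma poly_cchar_poly_0:
  assumes A: "A \<in> carrier_mat m m"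
  shows "poly (cchar_poly A) 0 = (-1) ^ m * complex_of_real (det A)"
proof -
  have "- char_matrix (map_mat complex_of_real A) 0 = (-1) \<cdot>\<^sub>m map_mat complex_of_real A"
    using A by (auto simp: char_matrix_def intro!: eq_matI)
  then show ?thesis
    using A char_poly_matrix[of "map_mat complex_of_real A" m] by (simp add: cchar_poly_def of_real_hom.hom_det)
qed

lemma eigenvalue_of_real_iff_root:
  assumes "B \<in> carrier_mat k k"
  shows "eigenvalue (map_mat complex_of_real B) z \<longleftrightarrow> poly (cchar_poly B) z = 0"
  unfolding cchar_poly_def by (rule eigenvalue_root_char_poly) (use assms in simp)

lemma eigenvalue_norm_le_row_sum:
  fixes M :: "'a :: real_normed_field mat"
  assumes M: "M \<in> carrier_mat k k" and ev: "eigenvalue M z"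
  shows "\<exists>i<k. norm z \<le> (\<Sum>l<k. norm (M $$ (i,l)))"
proof -
  obtain v where v: "v \<in> carrier_vec k" "v \<noteq> 0\<^sub>v k" and Mv: "M *\<^sub>v v = z \<cdot>\<^sub>v v"
    using ev M unfolding eigenvalue_def eigenvector_def by auto
  obtain i1 where i1: "i1 < k" "v $ i1 \<noteq> 0"
    using v by (metis eq_vecI index_zero_vec(1,2) carrier_vecD)
  define m where "m = Max ((\<lambda>i. norm (v $ i)) ` {..<k})"
  have le_m: "norm (v $ i) \<le> m" if "i < k" for i
    unfolding m_def using that by (intro Max_ge) auto
  have "m \<in> (\<lambda>i. norm (v $ i)) ` {..<k}"
    unfolding m_def using i1 by (intro Max_in) auto
  then obtain i where i: "i < k" "norm (v $ i) = m" by auto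
  have "0 < norm (v $ i1)" using i1(2) by simp
  with le_m[OF i1(1)] have "m > 0" by linarith
  have "z * v $ i = (\<Sum>l<k. M $$ (i,l) * v $ l)"
    using arg_cong[OF Mv, of "\<lambda>w. w $ i"] i v M by (auto simp: scalar_prod_def lessThan_atLeast0 intro!: sum.cong)
  moreover have "norm z * m = norm (z * v $ i)"
    using i by (simp add: norm_mult)
  ultimately have "norm z * m = norm (\<Sum>l<k. M $$ (i,l) * v $ l)"
    by simp
  also have "\<dots> \<le> (\<Sum>l<k. norm (M $$ (i,l)) * m)"
    by (rule order_trans[OF norm_sum sum_mono]) (auto simp: norm_mult intro: mult_left_mono le_m)
  also have "\<dots> = (\<Sum>l<k. norm (M $$ (i,l))) * m"
    by (rule sum_distrib_right[symmetric])
  finally have "norm z \<le> (\<Sum>l<k. norm (M $$ (i,l)))"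
    using \<open>m > 0\<close> by simp
  with i show ?thesis by blast
qed

lemma root_cchar_poly_multcol_bound:
  assumes B: "B \<in> carrier_mat k k" and e: "0 \<le> e" "e \<le> 1"
    and root: "poly (cchar_poly (multcol j e B)) z = 0"
  shows "cmod z \<le> (\<Sum>i<k. \<Sum>l<k. \<bar>B $$ (i,l)\<bar>)"
proof -
  let ?M = "map_mat complex_of_real (multcol j e B)"
  have "multcol j e B \<in> carrier_mat k k" using B by auto
  with root have "eigenvalue ?M z"
    using eigenvalue_of_real_iff_root by blast
  moreover have "?M \<in> carrier_mat k k" using B by auto
  ultimately obtain i where i: "i < k" and z_le: "cmod z \<le> (\<Sum>l<k. cmod (?M $$ (i,l)))"
    using eigenvalue_norm_le_row_sum by blast
  note z_le
  also have "\<dots> \<le> (\<Sum>l<k. \<bar>B $$ (i,l)\<bar>)"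
    using B i e by (intro sum_mono) (auto simp: abs_mult intro: mult_left_le_one_le)
  also have "\<dots> \<le> (\<Sum>i<k. \<Sum>l<k. \<bar>B $$ (i,l)\<bar>)"
    using i by (intro member_le_sum[where f = "\<lambda>i. \<Sum>l<k. \<bar>B $$ (i,l)\<bar>"]) (auto intro: sum_nonneg)
  finally show ?thesis .
qed

lemma small_roots_in_left_halfplane:
  fixes p q :: "complex poly"
  assumes q: "Re (poly q 0 / poly p 0) > 0"
  obtains \<delta> where "\<delta> > 0" and "\<And>e z. 0 < e \<Longrightarrow> e \<le> 1 \<Longrightarrow> cmod z < \<delta> \<Longrightarrow>
      (1 - complex_of_real e) * (z * poly p z) + complex_of_real e * poly q z = 0 \<Longrightarrow> Re z < 0"
proof -
  define g where "g = (\<lambda>z. poly q z / poly p z)"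
  have "poly p 0 \<noteq> 0" using q by auto
  then have "isCont g 0" unfolding g_def by simp
  then have "isCont (\<lambda>z. Re (g z)) 0" by (rule continuous_Re)
  then have "eventually (\<lambda>z. Re (g z) > 0) (at 0)"
    using q unfolding isCont_def g_def by (rule order_tendstoD(1))
  then obtain \<delta> where \<delta>: "\<delta> > 0" and pos: "\<And>z. z \<noteq> 0 \<Longrightarrow> dist z 0 < \<delta> \<Longrightarrow> Re (g z) > 0"
    unfolding eventually_at by auto
  show ?thesis
  proof (rule that[OF \<delta>])
    fix e z
    assume e: "0 < e" "e \<le> 1" and z: "cmod z < \<delta>"
      and root: "(1 - complex_of_real e) * (z * poly p z) + complex_of_real e * poly q z = 0"
    have g_pos: "Re (g z) > 0" using pos[of z] z q by (cases "z = 0") (auto simp: g_def)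
    then have "poly p z \<noteq> 0" by (auto simp: g_def)
    with root have "(1 - complex_of_real e) * z = - (complex_of_real e * g z)"
      by (simp add: g_def field_simps eq_neg_iff_add_eq_0)
    then have "Re ((1 - complex_of_real e) * z) = Re (- (complex_of_real e * g z))"
      by (rule arg_cong)
    then have "(1 - e) * Re z = - (e * Re (g z))"
      by simp
    moreover have "e * Re (g z) > 0" using e g_pos by simp
    ultimately show "Re z < 0"
      using e mult_nonneg_nonneg[of "1 - e" "Re z"] by linarith
  qed
qed

lemma compact_perturbation_avoids_zero:
  fixes f g :: "'a :: topological_space \<Rightarrow> 'b :: real_normed_vector"
  assumes S: "compact S" and f: "continuous_on S f" and g: "continuous_on S g"
    and nz: "\<And>z. z \<in> S \<Longrightarrow> f z \<noteq> 0"
  obtains e\<^sub>0 where "e\<^sub>0 > 0" and "\<And>e z. 0 \<le> e \<Longrightarrow> e < e\<^sub>0 \<Longrightarrow> z \<in> S \<Longrightarrow> f z \<noteq> e *\<^sub>R g z"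
proof (cases "S = {}")
  case True
  then show ?thesis using that[of 1] by auto
next
  case False
  obtain z\<^sub>0 where z\<^sub>0: "z\<^sub>0 \<in> S" "\<And>z. z \<in> S \<Longrightarrow> norm (f z\<^sub>0) \<le> norm (f z)"
    using continuous_attains_inf[OF S False continuous_on_norm[OF f]] by auto
  obtain z\<^sub>1 where z\<^sub>1: "\<And>z. z \<in> S \<Longrightarrow> norm (g z) \<le> norm (g z\<^sub>1)"
    using continuous_attains_sup[OF S False continuous_on_norm[OF g]] by auto
  define m M where "m = norm (f z\<^sub>0)" and "M = norm (g z\<^sub>1)"
  have m: "m > 0" using nz[OF z\<^sub>0(1)] by (simp add: m_def)
  have M: "M \<ge> 0" by (simp add: M_def)
  show ?thesis
  proof (rule that[of "m / (M + 1)"])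
    show "m / (M + 1) > 0" using m M by simp
    fix e z assume e: "0 \<le> e" "e < m / (M + 1)" and z: "z \<in> S"
    have "norm (e *\<^sub>R g z) \<le> e * (M + 1)"
      using e z\<^sub>1[OF z] by (simp add: M_def mult_left_mono)
    also have "\<dots> < m" using e M by (simp add: pos_less_divide_eq)
    also have "m \<le> norm (f z)" using z\<^sub>0(2)[OF z] by (simp add: m_def)
    finally show "f z \<noteq> e *\<^sub>R g z" by auto
  qed
qed

lemma perturbed_roots_in_left_halfplane:
  fixes p q :: "complex poly" and R :: real
  assumes p: "\<And>z. 0 \<le> Re z \<Longrightarrow> poly p z \<noteq> 0"
    and q: "Re (poly q 0 / poly p 0) > 0"
    and bound: "\<And>e z. 0 < e \<Longrightarrow> e \<le> 1 \<Longrightarrow>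
      (1 - complex_of_real e) * (z * poly p z) + complex_of_real e * poly q z = 0 \<Longrightarrow> cmod z \<le> R"
  obtains e where "0 < e" "e \<le> 1"
    "\<And>z. (1 - complex_of_real e) * (z * poly p z) + complex_of_real e * poly q z = 0 \<Longrightarrow> Re z < 0"
proof -
  obtain \<delta> where \<delta>: "\<delta> > 0" and small: "\<And>e z. 0 < e \<Longrightarrow> e \<le> 1 \<Longrightarrow> cmod z < \<delta> \<Longrightarrow>
      (1 - complex_of_real e) * (z * poly p z) + complex_of_real e * poly q z = 0 \<Longrightarrow> Re z < 0"
    using small_roots_in_left_halfplane[OF q] by blast
  define S where "S = {z. \<delta> \<le> cmod z \<and> cmod z \<le> R \<and> 0 \<le> Re z}"
  have "closed S" unfolding S_def
    by (intro closed_Collect_conj closed_Collect_le continuous_intros)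
  moreover have "bounded S" by (rule bounded_subset[OF bounded_cball[of 0 R]]) (auto simp: S_def)
  ultimately have "compact S" by (simp add: compact_eq_bounded_closed)
  then obtain e\<^sub>0 where e\<^sub>0: "e\<^sub>0 > 0" and avoid: "\<And>e z. 0 \<le> e \<Longrightarrow> e < e\<^sub>0 \<Longrightarrow> z \<in> S \<Longrightarrow>
      z * poly p z \<noteq> e *\<^sub>R (z * poly p z - poly q z)"
    by (rule compact_perturbation_avoids_zero[of S "\<lambda>z. z * poly p z" "\<lambda>z. z * poly p z - poly q z"])
      (use \<delta> p in \<open>auto simp: S_def intro!: continuous_intros\<close>)
  define e where "e = min 1 (e\<^sub>0 / 2)"
  have e: "0 < e" "e \<le> 1" "e < e\<^sub>0" using e\<^sub>0 by (auto simp: e_def)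
  show ?thesis
  proof (rule that[OF e(1,2)])
    fix z assume root: "(1 - complex_of_real e) * (z * poly p z) + complex_of_real e * poly q z = 0"
    show "Re z < 0"
    proof (rule ccontr)
      assume "\<not> Re z < 0"
      then have "z \<in> S"
        using small[OF e(1,2) _ root] bound[OF e(1,2) root] by (force simp: S_def)
      moreover have "z * poly p z = e *\<^sub>R (z * poly p z - poly q z)"
        using root by (simp add: scaleR_conv_of_real algebra_simps)
      ultimately show False using avoid e by auto
    qed
  qed
qed

lemma invertible_mat_det_nonzero:
  assumes A: "A \<in> carrier_mat k k" and inv: "invertible_mat A"
  shows "det A \<noteq> 0"
proof -
  obtain X where AX: "A * X = 1\<^sub>m k" and XA: "X * A = 1\<^sub>m (dim_row X)"
    using inv A unfolding invertible_mat_def inverts_mat_def by auto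
  have "dim_col X = k" using AX by (metis index_mult_mat(3) index_one_mat(3))
  moreover have "dim_row X = k" using XA A by (metis carrier_matD(2) index_mult_mat(3) index_one_mat(3))
  ultimately have X: "X \<in> carrier_mat k k" by auto
  have "det A * det X = 1" using det_mult[OF A X] AX by simp
  then show ?thesis by auto
qed

lemma principal_submatrix_carrier:
  assumes A: "A \<in> carrier_mat n n" and K: "K \<subseteq> {..<n}"
  shows "principal_submatrix A K \<in> carrier_mat (card K) (card K)"
proof -
  have "{i. i < n \<and> i \<in> K} = K" using K by auto
  then show ?thesis
    using A dim_submatrix[of A K K] unfolding principal_submatrix_def carrier_mat_def by simp
qed

lemma pick_lessThan:
  assumes "i < k"
  shows "pick {..<k} i = i"
proof -
  have "{a \<in> {..<k}. a < i} = {..<i}" using assms by auto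
  then show ?thesis using pick_card_in_set[of i "{..<k}"] assms by simp
qed

lemma principal_submatrix_lessThan:
  assumes "B \<in> carrier_mat k k"
  shows "principal_submatrix B {..<k} = B"
  using assms card_lessThan[of k] by (auto simp: principal_submatrix_def submatrix_def pick_lessThan intro!: eq_matI)

lemma pick_lessThan_remove:
  assumes j: "j < k" and a: "a < k - 1"
  shows "pick ({..<k} - {j}) a = (if a < j then a else Suc a)"
proof -
  let ?x = "if a < j then a else Suc a"
  have "{b \<in> {..<k} - {j}. b < ?x} = (if a < j then {..<a} else {..<Suc a} - {j})"
    using j a by auto
  then have "card {b \<in> {..<k} - {j}. b < ?x} = a"
    using j by (auto simp: card_Diff_singleton)
  moreover have "?x \<in> {..<k} - {j}" using j a by auto
  ultimately show ?thesis using pick_card_in_set[of ?x "{..<k} - {j}"] by simp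
qed

lemma principal_submatrix_remove:
  assumes B: "B \<in> carrier_mat k k" and j: "j < k"
  shows "principal_submatrix B ({..<k} - {j}) = mat_delete B j j"
proof -
  have "{i. i < k \<and> i \<in> {..<k} - {j}} = {..<k} - {j}" by auto
  then have "card {i. i < k \<and> i \<in> {..<k} - {j}} = k - 1"
    using j by (simp add: card_Diff_singleton)
  then show ?thesis
    using B j by (auto simp: principal_submatrix_def submatrix_def mat_delete_def pick_lessThan_remove
      intro!: eq_matI)
qed

lemma principal_submatrix_card_pred:
  assumes B: "B \<in> carrier_mat k k" and \<mu>: "\<mu> \<subseteq> {..<k}" and card: "card \<mu> = k - 1" and k: "0 < k"
  obtains j where "j < k" "principal_submatrix B \<mu> = mat_delete B j j"
proof -
  have "\<mu> \<noteq> {..<k}" using card k by auto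
  then obtain j where j: "j < k" "j \<notin> \<mu>" using \<mu> by auto
  then have "\<mu> \<subseteq> {..<k} - {j}" "card ({..<k} - {j}) = card \<mu>"
    using \<mu> card by (auto simp: card_Diff_singleton)
  then have "\<mu> = {..<k} - {j}" by (intro card_subset_eq) auto
  with j principal_submatrix_remove[OF B] that show ?thesis by blast
qed

lemma P0_minus_det_mult_det_delete_neg:
  assumes P0: "P0_minus B" and B: "B \<in> carrier_mat k k" and j: "j < k"
    and dB: "det B \<noteq> 0" and dC: "det (mat_delete B j j) \<noteq> 0"
  shows "det B * det (mat_delete B j j) < 0"
proof -
  have sign: "sgn (det (principal_submatrix B K)) = (-1) ^ card K"
    if "K \<subseteq> {..<k}" "K \<noteq> {}" "det (principal_submatrix B K) \<noteq> 0" for K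
    using P0 B that unfolding P0_minus_def by auto
  obtain k' where k': "k = Suc k'" using j by (cases k) auto
  have "sgn (det B) = (-1) ^ k"
    using sign[of "{..<k}"] dB j principal_submatrix_lessThan[OF B] by auto
  moreover have "sgn (det (mat_delete B j j)) = (-1) ^ k'"
  proof (cases "k' = 0")
    case True
    then have "mat_delete B j j = 1\<^sub>m 0" using B k' by (auto intro!: eq_matI)
    then show ?thesis using True by simp
  next
    case False
    have card: "card ({..<k} - {j}) = k'" using j k' by (simp add: card_Diff_singleton)
    then have "{..<k} - {j} \<noteq> {}" using False by (metis card.empty)
    then show ?thesis
      using sign[of "{..<k} - {j}"] dC card principal_submatrix_remove[OF B j] by auto
  qed
  ultimately have "sgn (det B * det (mat_delete B j j)) = -1"
    by (simp add: sgn_mult k')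
  then show ?thesis by (simp add: sgn_1_neg)
qed

lemma Re_cchar_poly_ratio_at_0:
  assumes B: "B \<in> carrier_mat k k" and j: "j < k"
  shows "Re (poly (cchar_poly B) 0 / poly (cchar_poly (mat_delete B j j)) 0)
    = - (det B / det (mat_delete B j j))"
proof -
  obtain k' where k': "k = Suc k'" using j by (cases k) auto
  have "mat_delete B j j \<in> carrier_mat k' k'" using mat_delete_carrier[OF B] k' by simp
  then have "poly (cchar_poly B) 0 / poly (cchar_poly (mat_delete B j j)) 0
      = ((-1) ^ k' * - complex_of_real (det B)) / ((-1) ^ k' * complex_of_real (det (mat_delete B j j)))"
    using poly_cchar_poly_0[OF B] poly_cchar_poly_0 k' by simp
  also have "\<dots> = complex_of_real (- (det B / det (mat_delete B j j)))"
    by (subst mult_divide_mult_cancel_left) simp_all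
  finally show ?thesis by simp
qed

lemma hurwitz_stable_multcol:
  fixes B :: "real mat"
  assumes B: "B \<in> carrier_mat k k" and j: "j < k"
    and P0: "P0_minus B" and dB: "det B \<noteq> 0"
    and stable: "hurwitz_stable (mat_delete B j j)"
  obtains e where "e > 0" "hurwitz_stable (multcol j e B)"
proof -
  define p q where "p = cchar_poly (mat_delete B j j)" and "q = cchar_poly B"
  have C: "mat_delete B j j \<in> carrier_mat (k - 1) (k - 1)" by (rule mat_delete_carrier[OF B])
  have p_nz: "poly p z \<noteq> 0" if "0 \<le> Re z" for z
    using stable that eigenvalue_of_real_iff_root[OF C] unfolding hurwitz_stable_def p_def by force
  then have "det (mat_delete B j j) \<noteq> 0"
    using poly_cchar_poly_0[OF C] by (force simp: p_def)
  then have "det B / det (mat_delete B j j) < 0"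
    using P0_minus_det_mult_det_delete_neg[OF P0 B j dB] by (simp add: divide_less_0_iff mult_less_0_iff)
  then have q0: "Re (poly q 0 / poly p 0) > 0"
    using Re_cchar_poly_ratio_at_0[OF B j] by (simp add: p_def q_def)
  note char = poly_cchar_poly_multcol[OF B j, folded p_def q_def]
  have bound: "cmod z \<le> (\<Sum>i<k. \<Sum>l<k. \<bar>B $$ (i,l)\<bar>)"
    if "0 < e" "e \<le> 1" "(1 - complex_of_real e) * (z * poly p z) + complex_of_real e * poly q z = 0" for e z
    using root_cchar_poly_multcol_bound[OF B, of e j z] that char by simp
  obtain e :: real where e: "0 < e" "e \<le> 1" and roots: "\<And>z. (1 - complex_of_real e) * (z * poly p z)
      + complex_of_real e * poly q z = 0 \<Longrightarrow> Re z < 0"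
    using perturbed_roots_in_left_halfplane[of p q "\<Sum>i<k. \<Sum>l<k. \<bar>B $$ (i,l)\<bar>"] p_nz q0 bound
    by blast
  have "multcol j e B \<in> carrier_mat k k" using B by auto
  then have "hurwitz_stable (multcol j e B)"
    unfolding hurwitz_stable_def using roots eigenvalue_of_real_iff_root char by metis
  with e that show ?thesis by blast
qed

lemma inertia_positive_eq_0_iff:
  assumes B: "B \<in> carrier_mat k k"
  shows "fst (snd (inertia B)) = 0 \<longleftrightarrow> \<not> hurwitz_unstable B"
proof -
  let ?q = "cchar_poly B"
  have "?q \<noteq> 0"
    using degree_monic_char_poly[of "map_mat complex_of_real B" k] B by (auto simp: cchar_poly_def)
  then have "finite {z. poly ?q z = 0 \<and> Re z > 0}"
    by (rule finite_subset[rotated, OF poly_roots_finite]) auto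
  then have "fst (snd (inertia B)) = 0 \<longleftrightarrow> (\<forall>z. poly ?q z = 0 \<and> Re z > 0 \<longrightarrow> order z ?q = 0)"
    unfolding inertia_def Let_def by simp
  also have "\<dots> \<longleftrightarrow> \<not> hurwitz_unstable B"
    using \<open>?q \<noteq> 0\<close> order_root[of ?q] eigenvalue_of_real_iff_root[OF B]
    unfolding hurwitz_unstable_def by auto
  finally show ?thesis .
qed

lemma inertia_unstable_neq_stable:
  assumes B: "B \<in> carrier_mat k k" and C: "C \<in> carrier_mat m m"
    and "hurwitz_unstable B" and "hurwitz_stable C"
  shows "inertia B \<noteq> inertia C"
proof -
  have "\<not> hurwitz_unstable C"
    using \<open>hurwitz_stable C\<close> unfolding hurwitz_stable_def hurwitz_unstable_def by force
  then have "fst (snd (inertia B)) \<noteq> fst (snd (inertia C))"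
    using inertia_positive_eq_0_iff[OF B] inertia_positive_eq_0_iff[OF C] \<open>hurwitz_unstable B\<close> by simp
  then show ?thesis by metis
qed

lemma pos_diagonal_one: "pos_diagonal k (1\<^sub>m k)"
  by (auto simp: pos_diagonal_def diagonal_mat_def)

lemma pos_diagonal_multrow_mat: "e > 0 \<Longrightarrow> pos_diagonal k (multrow_mat k j e)"
  by (auto simp: pos_diagonal_def diagonal_mat_def)

theorem mainTheorem8:
  fixes A :: "real mat" and n :: nat and \<kappa> :: "nat set"
  assumes "A \<in> carrier_mat n n"
    and "\<kappa> \<subseteq> {..<n}"
    and "invertible_mat (principal_submatrix A \<kappa>)"
    and "hurwitz_unstable (principal_submatrix A \<kappa>)"
    and "P0_minus (principal_submatrix A \<kappa>)"
    and "\<exists>\<mu>. \<mu> \<subseteq> {..<card \<kappa>} \<and> card \<mu> = card \<kappa> - 1 \<and>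
           hurwitz_stable (principal_submatrix (principal_submatrix A \<kappa>) \<mu>)"
  shows "D_Hopf A"
proof -
  define B k where "B = principal_submatrix A \<kappa>" and "k = card \<kappa>"
  have B: "B \<in> carrier_mat k k"
    unfolding B_def k_def by (rule principal_submatrix_carrier[OF assms(1,2)])
  have unstable: "hurwitz_unstable B" using assms(4) by (simp add: B_def)
  then have "0 < k"
    using B eigenvalue_imp_nonzero_dim[of "map_mat complex_of_real B" k]
    unfolding hurwitz_unstable_def by auto
  obtain \<mu> where \<mu>: "\<mu> \<subseteq> {..<k}" "card \<mu> = k - 1"
    and stable_\<mu>: "hurwitz_stable (principal_submatrix B \<mu>)"
    using assms(6) unfolding B_def k_def by blast
  obtain j where j: "j < k" and "principal_submatrix B \<mu> = mat_delete B j j"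
    using principal_submatrix_card_pred[OF B \<mu> \<open>0 < k\<close>] by blast
  with stable_\<mu> have "hurwitz_stable (mat_delete B j j)" by simp
  then obtain e where e: "e > 0" "hurwitz_stable (multcol j e B)"
    using hurwitz_stable_multcol[OF B j] assms(3,5) invertible_mat_det_nonzero[OF B]
    unfolding B_def by blast
  have "multcol j e B \<in> carrier_mat k k" using B by auto
  then have "inertia (B * 1\<^sub>m k) \<noteq> inertia (B * multrow_mat k j e)"
    using inertia_unstable_neq_stable[OF B _ unstable e(2)] B by (simp add: multcol_mat[OF B, symmetric])
  moreover have "\<kappa> \<subseteq> {..<dim_row A}" using assms(1,2) by auto
  ultimately show ?thesis
    unfolding D_Hopf_def using assms(3) pos_diagonal_one pos_diagonal_multrow_mat[OF e(1)]
    unfolding B_def k_def by blast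
qed

end
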